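(* Let $(e_i)_{i\in\omega}$ be a sequence of events equipped with the linear order $<_0$ ($e_i<_0 e_j$ iff $i<j$), predicates $\mathrm{Add},\mathrm{Rem},\mathrm{Cnt}$ and functions $\mathrm{val},\chi$ as described in the context, and let $\gamma$ be a function satisfying FS0, FS1 and FS2. Then for every event $x$ with $\mathrm{Op}^1(x)$ there is no event $y$ with $\mathrm{Op}^0(y)$ such that $\gamma(x)<_0 y<_0 x$ and $\mathrm{val}(x)=\mathrm{val}(y)$.
   Context: Setting: an infinite sequence of events $(e_i)_{i\in\omega}$, linearly ordered by $<_0$ where $e_i<_0e_j$ iff $i<j$. Three unary predicates $\mathrm{Add},\mathrm{Rem},\mathrm{Cnt}$ partition the events. Each event $a$ has a key $\mathrm{val}(a)\in\mathbb N$ and a status $\chi(a)\in\{0,1,f\}$, with $\chi(a)\in\{0,1\}$ whenever $\mathrm{Cnt}(a)$. Notation: for $p\in\{0,1,f\}$, $\mathrm{Add}^p(a)$ abbreviates $\mathrm{Add}(a)\wedge\chi(a)=p$, and $\mathrm{Rem}^p(a)$ similarly; $\mathrm{Cnt}^p(a)$ is defined similarly for $p\in\{0,1\}$; for $p\in\{0,1\}$, $\mathrm{Op}^p(a)$ abbreviates $(\mathrm{Add}(a)\vee\mathrm{Rem}(a)\vee\mathrm{Cnt}(a))\wedge\chi(a)=p$. Properties of a function $\gamma$: FS0: $<_0$ is a linear ordering of the events; $\mathrm{Add},\mathrm{Rem},\mathrm{Cnt}$ are pairwise disjoint; $\gamma$ is defined on the set of $\mathrm{Op}^1$ events and its values are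 $\mathrm{Add}^0$ events. FS1: for every event $a$ with $\mathrm{Op}^1(a)$: $\gamma(a)<_0 a$, $\mathrm{Add}^0(\gamma(a))$, $\mathrm{val}(a)=\mathrm{val}(\gamma(a))$, and there is no event $r$ with $\mathrm{Rem}^1(r)$, $\gamma(r)=\gamma(a)$ and $\gamma(a)<_0 r<_0 a$. FS2: for all events $a<_0 b$ with $\mathrm{Add}^0(a)$ and $\mathrm{Op}^0(b)$: if $\mathrm{val}(a)=\mathrm{val}(b)$ then there is an event $r$ with $a<_0 r<_0 b$, $\mathrm{Rem}^1(r)$ and $a=\gamma(r)$. *)

theory Defs
  imports Main
begin

text \<open>Events are e_i for i :: nat, identified with their index; the order <_0 is < on nat.\<close>

datatype status = S0 | S1 | Sf

definition Op :: "(nat \<Rightarrow> bool) \<Rightarrow> (nat \<Rightarrow> bool) \<Rightarrow> (nat \<Rightarrow> bool) \<Rightarrow> (nat \<Rightarrow> status) \<Rightarrow> status \<Rightarrow> nat \<Rightarrow> bool" where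
  "Op Add Rem Cnt chi p a \<longleftrightarrow> (Add a \<or> Rem a \<or> Cnt a) \<and> chi a = p"

definition setting :: "(nat \<Rightarrow> bool) \<Rightarrow> (nat \<Rightarrow> bool) \<Rightarrow> (nat \<Rightarrow> bool) \<Rightarrow> (nat \<Rightarrow> status) \<Rightarrow> bool" where
  "setting Add Rem Cnt chi \<longleftrightarrow>
     (\<forall>a. Add a \<or> Rem a \<or> Cnt a) \<and>
     (\<forall>a. \<not> (Add a \<and> Rem a) \<and> \<not> (Add a \<and> Cnt a) \<and> \<not> (Rem a \<and> Cnt a)) \<and>
     (\<forall>a. Cnt a \<longrightarrow> chi a \<in> {S0, S1})"

definition FS0 where
  "FS0 Add Rem Cnt chi (\<gamma> :: nat \<Rightarrow> nat) \<longleftrightarrow>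
     (\<forall>a. \<not> (Add a \<and> Rem a) \<and> \<not> (Add a \<and> Cnt a) \<and> \<not> (Rem a \<and> Cnt a)) \<and>
     (\<forall>a. Op Add Rem Cnt chi S1 a \<longrightarrow> Add (\<gamma> a) \<and> chi (\<gamma> a) = S0)"

definition FS1 where
  "FS1 Add Rem Cnt chi (val :: nat \<Rightarrow> nat) (\<gamma> :: nat \<Rightarrow> nat) \<longleftrightarrow>
     (\<forall>a. Op Add Rem Cnt chi S1 a \<longrightarrow>
        \<gamma> a < a \<and> Add (\<gamma> a) \<and> chi (\<gamma> a) = S0 \<and> val a = val (\<gamma> a) \<and>
        \<not> (\<exists>r. Rem r \<and> chi r = S1 \<and> \<gamma> r = \<gamma> a \<and> \<gamma> a < r \<and> r < a))"

definition FS2 where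
  "FS2 Add Rem Cnt chi (val :: nat \<Rightarrow> nat) (\<gamma> :: nat \<Rightarrow> nat) \<longleftrightarrow>
     (\<forall>a b. a < b \<and> Add a \<and> chi a = S0 \<and> Op Add Rem Cnt chi S0 b \<longrightarrow>
        val a = val b \<longrightarrow>
        (\<exists>r. a < r \<and> r < b \<and> Rem r \<and> chi r = S1 \<and> a = \<gamma> r))"

end

theory Submission
  imports Defs
begin

text \<open>An \<open>Op\<^sup>0\<close> event \<open>y\<close> with the key of \<open>x\<close> strictly between \<open>\<gamma> x\<close> and \<open>x\<close> would,
  by FS2 applied to the \<open>Add\<^sup>0\<close> event \<open>\<gamma> x\<close>, force a successful removal of \<open>\<gamma> x\<close>
  before \<open>y\<close>, hence before \<open>x\<close>; FS1 forbids exactly that.\<close>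

lemma FS1D:
  assumes "FS1 Add Rem Cnt chi val \<gamma>" and "Op Add Rem Cnt chi S1 a"
  shows "Add (\<gamma> a)" and "chi (\<gamma> a) = S0" and "val a = val (\<gamma> a)"
  using assms unfolding FS1_def by blast+

lemma FS1_no_removal_between:
  assumes "FS1 Add Rem Cnt chi val \<gamma>" and "Op Add Rem Cnt chi S1 a"
    and "Rem r" and "chi r = S1" and "\<gamma> r = \<gamma> a" and "\<gamma> a < r" and "r < a"
  shows False
  using assms unfolding FS1_def by blast

lemma FS2D:
  assumes "FS2 Add Rem Cnt chi val \<gamma>"
    and "a < b" and "Add a" and "chi a = S0" and "Op Add Rem Cnt chi S0 b" and "val a = val b"
  obtains r where "a < r" and "r < b" and "Rem r" and "chi r = S1" and "\<gamma> r = a"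
  using assms unfolding FS2_def by metis

theorem lemma2p1:
  fixes Add Rem Cnt :: "nat \<Rightarrow> bool" and chi :: "nat \<Rightarrow> status"
    and val :: "nat \<Rightarrow> nat" and \<gamma> :: "nat \<Rightarrow> nat"
  assumes "setting Add Rem Cnt chi"
    and "FS0 Add Rem Cnt chi \<gamma>"
    and "FS1 Add Rem Cnt chi val \<gamma>"
    and "FS2 Add Rem Cnt chi val \<gamma>"
    and "Op Add Rem Cnt chi S1 x"
  shows "\<not> (\<exists>y. Op Add Rem Cnt chi S0 y \<and> \<gamma> x < y \<and> y < x \<and> val x = val y)"
proof
  assume "\<exists>y. Op Add Rem Cnt chi S0 y \<and> \<gamma> x < y \<and> y < x \<and> val x = val y"
  then obtain y where y: "Op Add Rem Cnt chi S0 y" "\<gamma> x < y" "y < x" "val x = val y"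
    by blast
  have "val (\<gamma> x) = val y"
    using FS1D(3)[OF assms(3,5)] y(4) by simp
  then obtain r where "\<gamma> x < r" "r < y" "Rem r" "chi r = S1" "\<gamma> r = \<gamma> x"
    using FS2D[OF assms(4) y(2) FS1D(1,2)[OF assms(3,5)] y(1)] by blast
  moreover from \<open>r < y\<close> y(3) have "r < x" by simp
  ultimately show False
    using FS1_no_removal_between[OF assms(3,5)] by blast
qed

end
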